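(* Let $n,m\in\mathbb{N}$ and $f:\mathbb{F}_2^n\to\mathbb{F}_2$. Then $f$ is $m$-bent if and only if $C^{(m)}_f(\mathbf{z})=0$ for all $\mathbf{z}\in\mathbb{F}_2^n\setminus\{0^n\}$ and $C^{(m)}_f(0^n)=2^n$.
   Context: $\zeta_m=e^{2\pi i/m}$; $wt$ is Hamming weight; $\mathbf{x}\cdot\mathbf{y}=\bigoplus_i x_iy_i\in\mathbb{F}_2$; $\mathbf{x}\odot\mathbf{y}=\sum_i x_iy_i$ computed in the integers. The $m$-Hadamard transform is $\mathcal{H}^{(m)}_f(\boldsymbol{\omega})=2^{-n/2}\sum_{\mathbf{x}\in\mathbb{F}_2^n}(-1)^{f(\mathbf{x})\oplus\mathbf{x}\cdot\boldsymbol{\omega}}\zeta_m^{wt(\mathbf{x})}$; $f$ is called $m$-bent if $|\mathcal{H}^{(m)}_f(\boldsymbol{\omega})|=1$ for all $\boldsymbol{\omega}\in\mathbb{F}_2^n$. The $m$-autocorrelation is $C^{(m)}_{f}(\mathbf{y})=\sum_{\mathbf{x}\in\mathbb{F}_2^n}(-1)^{f(\mathbf{x})\oplus f(\mathbf{x}\oplus\mathbf{y})}(\zeta_m^2)^{\mathbf{x}\odot\mathbf{y}}$. *)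

theory Defs
  imports "HOL-Analysis.Analysis"
begin

text \<open>Vectors of F_2^n are modelled as boolean lists of length n (True = 1).\<close>

definition vecs :: "nat \<Rightarrow> bool list set" where
  "vecs n = {xs. length xs = n}"

definition bit :: "bool \<Rightarrow> nat" where
  "bit b = (if b then 1 else 0)"

definition wt :: "bool list \<Rightarrow> nat" where
  "wt xs = length (filter id xs)"

definition dotF2 :: "bool list \<Rightarrow> bool list \<Rightarrow> bool" where
  "dotF2 x y = odd (\<Sum>i<length x. bit (x ! i \<and> y ! i))"

definition dotZ :: "bool list \<Rightarrow> bool list \<Rightarrow> nat" where
  "dotZ x y = (\<Sum>i<length x. bit (x ! i \<and> y ! i))"

definition xorv :: "bool list \<Rightarrow> bool list \<Rightarrow> bool list" where
  "xorv x y = map2 (\<noteq>) x y"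

definition sgn1 :: "bool \<Rightarrow> complex" where
  "sgn1 b = (if b then -1 else 1)"

definition zeta :: "nat \<Rightarrow> complex" where
  "zeta m = exp (2 * of_real pi * \<i> / of_nat m)"

definition mHadamard :: "nat \<Rightarrow> nat \<Rightarrow> (bool list \<Rightarrow> bool) \<Rightarrow> bool list \<Rightarrow> complex" where
  "mHadamard m n f w = (1 / of_real (sqrt (2 ^ n))) *
     (\<Sum>x\<in>vecs n. sgn1 (f x \<noteq> dotF2 x w) * zeta m ^ wt x)"

definition m_bent :: "nat \<Rightarrow> nat \<Rightarrow> (bool list \<Rightarrow> bool) \<Rightarrow> bool" where
  "m_bent m n f = (\<forall>w\<in>vecs n. norm (mHadamard m n f w) = 1)"

definition mAutocorr :: "nat \<Rightarrow> nat \<Rightarrow> (bool list \<Rightarrow> bool) \<Rightarrow> bool list \<Rightarrow> complex" where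
  "mAutocorr m n f y = (\<Sum>x\<in>vecs n. sgn1 (f x \<noteq> f (xorv x y)) * (zeta m ^ 2) ^ dotZ x y)"

end

theory Submission
  imports Defs
begin

(* Put g(x) = (-1)^f(x) zeta_m^wt(x). The m-Hadamard transform of f is the normalised ordinary
   Walsh-Hadamard transform G of the complex function g. Since wt(x + z) = wt x + wt z - 2 (x (.) z)
   and |zeta_m| = 1, the m-autocorrelation C(z) is zeta_m^wt(z) times the ordinary autocorrelation
   A(z) = sum_x g(x) conj(g(x + z)). By the Wiener-Khinchin identity the Walsh transform of A is
   |G|^2, and by Walsh inversion |G|^2 is the constant 2^n exactly when A = 2^n delta_0. *)

lemma finite_vecs [simp]: "finite (vecs n)"
  using finite_lists_length_eq[of "UNIV :: bool set" n] by (simp add: vecs_def)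

lemma card_vecs: "card (vecs n) = 2 ^ n"
  using card_lists_length_eq[of "UNIV :: bool set" n] by (simp add: vecs_def)

lemma replicate_False_in_vecs [simp]: "replicate n False \<in> vecs n"
  by (simp add: vecs_def)

lemma dotZ_Nil [simp]: "dotZ [] y = 0"
  by (simp add: dotZ_def)

lemma dotZ_Cons [simp]: "dotZ (a # x) (b # y) = bit (a \<and> b) + dotZ x y"
  unfolding dotZ_def by (simp only: length_Cons sum.lessThan_Suc_shift) simp

lemma dotF2_eq_odd_dotZ: "dotF2 x y = odd (dotZ x y)"
  by (simp add: dotF2_def dotZ_def)

lemma wt_Nil [simp]: "wt [] = 0"
  by (simp add: wt_def)

lemma wt_Cons [simp]: "wt (a # x) = bit a + wt x"
  by (simp add: wt_def bit_def)

lemma xorv_Nil [simp]: "xorv [] y = []"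
  by (simp add: xorv_def)

lemma xorv_Cons [simp]: "xorv (a # x) (b # y) = (a \<noteq> b) # xorv x y"
  by (simp add: xorv_def)

lemma length_xorv [simp]: "length (xorv x y) = min (length x) (length y)"
  by (simp add: xorv_def)

lemma xorv_xorv_cancel: "length x = length z \<Longrightarrow> xorv x (xorv x z) = z"
  by (induction x z rule: list_induct2) auto

lemma xorv_replicate_False [simp]: "xorv x (replicate (length x) False) = x"
  by (induction x) auto

lemma xorv_eq_replicate_False_iff:
  "length y = length z \<Longrightarrow> xorv y z = replicate (length y) False \<longleftrightarrow> y = z"
  by (induction y z rule: list_induct2) auto

lemma dotZ_replicate_False [simp]: "dotZ x (replicate (length x) False) = 0"
  by (induction x) (auto simp: bit_def)

lemma dotF2_replicate_False [simp]: "dotF2 (replicate n False) w = False"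
  by (simp add: dotF2_def bit_def)

lemma dotF2_Cons: "dotF2 (a # x) (b # y) = ((a \<and> b) \<noteq> dotF2 x y)"
  by (auto simp: dotF2_eq_odd_dotZ bit_def)

lemma dotF2_commute: "length x = length y \<Longrightarrow> dotF2 x y = dotF2 y x"
  by (induction x y rule: list_induct2) (auto simp: dotF2_Cons)

lemma dotF2_xorv:
  "\<lbrakk>length x = length y; length y = length w\<rbrakk> \<Longrightarrow> dotF2 (xorv x y) w = (dotF2 x w \<noteq> dotF2 y w)"
proof (induction x y arbitrary: w rule: list_induct2)
  case Nil
  then show ?case by (simp add: dotF2_eq_odd_dotZ)
next
  case (Cons a x b y)
  then obtain c w' where "w = c # w'" by (cases w) auto
  with Cons show ?case by (auto simp: dotF2_Cons)
qed

lemma wt_xorv: "length x = length z \<Longrightarrow> wt (xorv x z) + 2 * dotZ x z = wt x + wt z"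
  by (induction x z rule: list_induct2) (auto simp: bit_def)

lemma sgn1_mult: "sgn1 a * sgn1 b = sgn1 (a \<noteq> b)"
  by (simp add: sgn1_def)

lemma cnj_sgn1 [simp]: "cnj (sgn1 a) = sgn1 a"
  by (simp add: sgn1_def)

lemma sum_vecs_Suc:
  "(\<Sum>w\<in>vecs (Suc n). h w) = (\<Sum>w\<in>vecs n. h (True # w)) + (\<Sum>w\<in>vecs n. h (False # w))"
proof -
  have "vecs (Suc n) = (\<lambda>(b, w). b # w) ` (UNIV \<times> vecs n)"
    by (auto simp: vecs_def image_iff length_Suc_conv)
  then have "(\<Sum>w\<in>vecs (Suc n). h w) = (\<Sum>(b, w)\<in>UNIV \<times> vecs n. h (b # w))"
    by (simp add: sum.reindex inj_on_def case_prod_beta)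
  also have "\<dots> = (\<Sum>w\<in>vecs n. h (True # w)) + (\<Sum>w\<in>vecs n. h (False # w))"
    by (simp add: sum.cartesian_product[symmetric] UNIV_bool add.commute)
  finally show ?thesis .
qed

lemma sum_vecs_reindex_xorv:
  "x \<in> vecs n \<Longrightarrow> (\<Sum>y\<in>vecs n. h y) = (\<Sum>z\<in>vecs n. h (xorv x z))"
  by (rule sum.reindex_bij_witness[where i = "xorv x" and j = "xorv x"])
     (auto simp: vecs_def xorv_xorv_cancel)

lemma sum_sgn1_dotF2:
  "z \<in> vecs n \<Longrightarrow> (\<Sum>w\<in>vecs n. sgn1 (dotF2 z w)) = (if z = replicate n False then 2 ^ n else 0)"
proof (induction n arbitrary: z)
  case 0
  then show ?case by (simp add: vecs_def dotF2_def sgn1_def)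
next
  case (Suc n)
  then obtain a z' where z: "z = a # z'" "z' \<in> vecs n"
    by (cases z) (auto simp: vecs_def)
  have flip: "(\<Sum>w\<in>vecs n. sgn1 (\<not> dotF2 z' w)) = - (\<Sum>w\<in>vecs n. sgn1 (dotF2 z' w))"
    unfolding sum_negf[symmetric] by (rule sum.cong) (auto simp: sgn1_def)
  show ?case
    using Suc.IH[OF z(2)] flip by (cases a) (simp_all add: sum_vecs_Suc z dotF2_Cons)
qed

definition walsh :: "nat \<Rightarrow> (bool list \<Rightarrow> complex) \<Rightarrow> bool list \<Rightarrow> complex" where
  "walsh n g w = (\<Sum>x\<in>vecs n. g x * sgn1 (dotF2 x w))"

definition autocorr :: "nat \<Rightarrow> (bool list \<Rightarrow> complex) \<Rightarrow> bool list \<Rightarrow> complex" where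
  "autocorr n g z = (\<Sum>x\<in>vecs n. g x * cnj (g (xorv x z)))"

lemma sgn1_dotF2_mult:
  "\<lbrakk>x \<in> vecs n; y \<in> vecs n; w \<in> vecs n\<rbrakk> \<Longrightarrow>
    sgn1 (dotF2 x w) * sgn1 (dotF2 y w) = sgn1 (dotF2 (xorv x y) w)"
  by (simp add: vecs_def dotF2_xorv sgn1_mult)

lemma walsh_autocorr:
  assumes w: "w \<in> vecs n"
  shows "walsh n (autocorr n g) w = walsh n g w * cnj (walsh n g w)"
proof -
  have "walsh n (autocorr n g) w =
      (\<Sum>x\<in>vecs n. \<Sum>z\<in>vecs n. g x * cnj (g (xorv x z)) * sgn1 (dotF2 z w))"
    unfolding walsh_def autocorr_def sum_distrib_right by (rule sum.swap)
  also have "\<dots> = (\<Sum>x\<in>vecs n. \<Sum>y\<in>vecs n. g x * cnj (g y) * sgn1 (dotF2 (xorv x y) w))"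
  proof (rule sum.cong [OF refl])
    fix x assume x: "x \<in> vecs n"
    show "(\<Sum>z\<in>vecs n. g x * cnj (g (xorv x z)) * sgn1 (dotF2 z w)) =
        (\<Sum>y\<in>vecs n. g x * cnj (g y) * sgn1 (dotF2 (xorv x y) w))"
      using sum_vecs_reindex_xorv[OF x, of "\<lambda>y. g x * cnj (g y) * sgn1 (dotF2 (xorv x y) w)"] x
      by (auto simp: vecs_def xorv_xorv_cancel intro: sum.cong)
  qed
  also have "\<dots> = (\<Sum>x\<in>vecs n. \<Sum>y\<in>vecs n. g x * sgn1 (dotF2 x w) * cnj (g y * sgn1 (dotF2 y w)))"
    using w by (intro sum.cong refl) (simp add: sgn1_dotF2_mult[symmetric])
  also have "\<dots> = walsh n g w * cnj (walsh n g w)"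
    by (simp add: walsh_def sum_product cnj_sum)
  finally show ?thesis .
qed

lemma walsh_walsh:
  assumes y: "y \<in> vecs n"
  shows "walsh n (walsh n F) y = 2 ^ n * F y"
proof -
  have "sgn1 (dotF2 z w) * sgn1 (dotF2 w y) = sgn1 (dotF2 (xorv z y) w)"
    if "z \<in> vecs n" "w \<in> vecs n" for z w
    using that y sgn1_dotF2_mult[of z n y w] by (simp add: vecs_def dotF2_commute[of w y])
  then have "walsh n (walsh n F) y = (\<Sum>z\<in>vecs n. F z * (\<Sum>w\<in>vecs n. sgn1 (dotF2 (xorv z y) w)))"
    unfolding walsh_def sum_distrib_left sum_distrib_right
    by (subst sum.swap) (simp add: mult.assoc)
  also have "\<dots> = (\<Sum>z\<in>vecs n. F z * (if z = y then 2 ^ n else 0))"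
  proof (intro sum.cong refl)
    fix z assume z: "z \<in> vecs n"
    then have "xorv z y \<in> vecs n" and "xorv z y = replicate n False \<longleftrightarrow> z = y"
      using y xorv_eq_replicate_False_iff[of z y] by (auto simp: vecs_def)
    then show "F z * (\<Sum>w\<in>vecs n. sgn1 (dotF2 (xorv z y) w)) = F z * (if z = y then 2 ^ n else 0)"
      by (simp add: sum_sgn1_dotF2)
  qed
  also have "\<dots> = 2 ^ n * F y"
    using y by (simp add: if_distrib[of "\<lambda>t. F _ * t"] mult.commute cong: if_cong)
  finally show ?thesis .
qed

lemma walsh_eq_const_iff:
  "(\<forall>w\<in>vecs n. walsh n F w = c) \<longleftrightarrow> (\<forall>z\<in>vecs n. F z = (if z = replicate n False then c else 0))"
proof
  assume const: "\<forall>w\<in>vecs n. walsh n F w = c"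
  show "\<forall>z\<in>vecs n. F z = (if z = replicate n False then c else 0)"
  proof
    fix y assume y: "y \<in> vecs n"
    have "2 ^ n * F y = (\<Sum>w\<in>vecs n. c * sgn1 (dotF2 y w))"
      using y const by (auto simp: walsh_walsh[symmetric] walsh_def vecs_def dotF2_commute intro: sum.cong)
    also have "\<dots> = 2 ^ n * (if y = replicate n False then c else 0)"
      using y by (simp add: sum_distrib_left[symmetric] sum_sgn1_dotF2)
    finally show "F y = (if y = replicate n False then c else 0)"
      by simp
  qed
next
  assume delta: "\<forall>z\<in>vecs n. F z = (if z = replicate n False then c else 0)"
  show "\<forall>w\<in>vecs n. walsh n F w = c"
  proof
    fix w
    have "walsh n F w = (\<Sum>z\<in>vecs n. if z = replicate n False then c else 0)"
      unfolding walsh_def using delta by (intro sum.cong) (auto simp: sgn1_def)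
    then show "walsh n F w = c"
      by simp
  qed
qed

definition zeta_twist :: "nat \<Rightarrow> (bool list \<Rightarrow> bool) \<Rightarrow> bool list \<Rightarrow> complex" where
  "zeta_twist m f x = sgn1 (f x) * zeta m ^ wt x"

lemma norm_zeta [simp]: "norm (zeta m) = 1"
  by (simp add: zeta_def norm_exp_eq_Re)

lemma zeta_nonzero [simp]: "zeta m \<noteq> 0"
  by (simp add: zeta_def)

lemma zeta_mult_cnj: "zeta m * cnj (zeta m) = 1"
  using complex_norm_square[of "zeta m"] by simp

lemma mHadamard_eq_walsh:
  "mHadamard m n f w = walsh n (zeta_twist m f) w / of_real (sqrt (2 ^ n))"
  unfolding mHadamard_def walsh_def zeta_twist_def
  by (simp add: sum_divide_distrib) (rule sum.cong, auto simp: sgn1_def)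

lemma norm_divide_sqrt_eq_1_iff:
  assumes "c > 0"
  shows "norm (z / complex_of_real (sqrt c)) = 1 \<longleftrightarrow> z * cnj z = complex_of_real c"
proof -
  have "norm (z / complex_of_real (sqrt c)) = 1 \<longleftrightarrow> norm z = sqrt c"
    using assms by (auto simp: norm_divide)
  also have "\<dots> \<longleftrightarrow> norm z ^ 2 = c"
    using assms by (auto simp: real_sqrt_unique)
  also have "\<dots> \<longleftrightarrow> z * cnj z = complex_of_real c"
    by (metis complex_norm_square of_real_eq_iff)
  finally show ?thesis .
qed

lemma m_bent_iff_walsh:
  "m_bent m n f \<longleftrightarrow> (\<forall>w\<in>vecs n. walsh n (zeta_twist m f) w * cnj (walsh n (zeta_twist m f) w) = 2 ^ n)"
  using norm_divide_sqrt_eq_1_iff[of "2 ^ n"] by (simp add: m_bent_def mHadamard_eq_walsh)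

lemma mAutocorr_eq_autocorr:
  assumes z: "z \<in> vecs n"
  shows "mAutocorr m n f z = zeta m ^ wt z * autocorr n (zeta_twist m f) z"
  unfolding mAutocorr_def autocorr_def sum_distrib_left
proof (rule sum.cong [OF refl])
  fix x assume x: "x \<in> vecs n"
  let ?u = "zeta m" and ?a = "wt (xorv x z)" and ?d = "dotZ x z"
  have "?u ^ wt z * ?u ^ wt x * cnj ?u ^ ?a = ?u ^ (?a + 2 * ?d) * cnj ?u ^ ?a"
    using wt_xorv[of x z] x z by (simp add: vecs_def power_add[symmetric] add.commute)
  also have "\<dots> = (?u * cnj ?u) ^ ?a * (?u ^ 2) ^ ?d"
    unfolding power_add power_mult power_mult_distrib by (simp add: mult_ac)
  finally have phase: "?u ^ wt z * ?u ^ wt x * cnj ?u ^ ?a = (?u ^ 2) ^ ?d"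
    by (simp add: zeta_mult_cnj)
  have "?u ^ wt z * (zeta_twist m f x * cnj (zeta_twist m f (xorv x z))) =
      sgn1 (f x \<noteq> f (xorv x z)) * (?u ^ wt z * ?u ^ wt x * cnj ?u ^ ?a)"
    by (simp add: zeta_twist_def sgn1_def mult_ac)
  then show "sgn1 (f x \<noteq> f (xorv x z)) * (?u ^ 2) ^ ?d =
      ?u ^ wt z * (zeta_twist m f x * cnj (zeta_twist m f (xorv x z)))"
    by (simp only: phase)
qed

lemma mAutocorr_zero: "mAutocorr m n f (replicate n False) = 2 ^ n"
proof -
  have "mAutocorr m n f (replicate n False) = (\<Sum>x\<in>vecs n. 1)"
    unfolding mAutocorr_def by (intro sum.cong) (auto simp: vecs_def sgn1_def)
  then show ?thesis
    by (simp add: card_vecs)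
qed

theorem theorem6:
  fixes n m :: nat and f :: "bool list \<Rightarrow> bool"
  assumes "m \<ge> 1"
  shows "m_bent m n f \<longleftrightarrow>
    ((\<forall>z\<in>vecs n. z \<noteq> replicate n False \<longrightarrow> mAutocorr m n f z = 0) \<and>
     mAutocorr m n f (replicate n False) = 2 ^ n)"
proof -
  let ?g = "zeta_twist m f" and ?zero = "replicate n False"
  have autocorr_zero: "autocorr n ?g ?zero = 2 ^ n"
    using mAutocorr_eq_autocorr[of ?zero n m f] by (simp add: mAutocorr_zero wt_def)
  have "m_bent m n f \<longleftrightarrow> (\<forall>w\<in>vecs n. walsh n (autocorr n ?g) w = 2 ^ n)"
    by (simp add: m_bent_iff_walsh walsh_autocorr)
  also have "\<dots> \<longleftrightarrow> (\<forall>z\<in>vecs n. autocorr n ?g z = (if z = ?zero then 2 ^ n else 0))"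
    by (rule walsh_eq_const_iff)
  also have "\<dots> \<longleftrightarrow> (\<forall>z\<in>vecs n. z \<noteq> ?zero \<longrightarrow> autocorr n ?g z = 0)"
    using autocorr_zero by auto
  also have "\<dots> \<longleftrightarrow> (\<forall>z\<in>vecs n. z \<noteq> ?zero \<longrightarrow> mAutocorr m n f z = 0)"
    by (simp add: mAutocorr_eq_autocorr)
  finally show ?thesis
    by (simp add: mAutocorr_zero)
qed

end
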